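(* Let $L\subseteq B_i$ be an SINR-feasible set of links contained in a single bucket $B_i$. Then there is a constant $C$ depending only on $\alpha,\beta,\varepsilon$ such that for every $e\in B_i$, \[\sum_{\{e'\in L: d_{e'}\ge d_e\}}\bar a_{e'}(e)\;\le\;\bar a_L(e)+\bar a_e(e)\;\le\;C.\]
   Context: Constants: $\alpha\ge0$, $N>0$, $\beta>0$. Nodes lie in the Euclidean plane. A link is $e=(s_e,r_e,P_e)$ with transmitter, receiver, power $P_e>0$; $\mathcal{L}$ is the set of links. $d_e=d(s_e,r_e)$, $d_{e'e}=d(s_{e'},r_e)$, $S_e=P_e/d_e^\alpha$, $S_{e'e}=P_{e'}/d_{e'e}^\alpha$, $\gamma_e=\beta S_e/(S_e-\beta N)$. Affectances: $\hat a_{e'}(e)=S_{e'e}/S_e$, $a_{e'}(e)=\gamma_e\hat a_{e'}(e)$, $\bar a_{e'}(e)=\min\{1,a_{e'}(e)\}$, and $\bar a_L(e)=\sum_{e'\in L\setminus\{e\}}\bar a_{e'}(e)$. $L$ is SINR-feasible if $S_e/(N+\sum_{e'\in L\setminus\{e\}}S_{e'e})\ge\beta$ for all $e\in L$ (equivalently $\sum_{e'\in L\setminus\{e\}}a_{e'}(e)\le1$). Buckets: $S_{\min}=\min_{e\in\mathcal{L}}S_e$, $B_i=\{e\in\mathcal{L}:2^iS_{\min}\le S_e<2^{i+1}S_{\min}\}$. Standing assumption: there is a constant $\varepsilon>0$ with $S_e/N\ge(1+\varepsilon)\beta$ for all $e\in\mathcal{L}$. *)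

theory Defs
  imports "HOL-Analysis.Analysis"
begin

type_synonym point = "real^2"
type_synonym link = "point \<times> point \<times> real"

definition sender :: "link \<Rightarrow> point" where "sender e = fst e"
definition receiver :: "link \<Rightarrow> point" where "receiver e = fst (snd e)"
definition power :: "link \<Rightarrow> real" where "power e = snd (snd e)"

definition dlen :: "link \<Rightarrow> real" where "dlen e = dist (sender e) (receiver e)"
definition dcross :: "link \<Rightarrow> link \<Rightarrow> real" where
  "dcross e' e = dist (sender e') (receiver e)"

definition sig :: "real \<Rightarrow> link \<Rightarrow> real" where
  "sig \<alpha> e = power e / (dlen e powr \<alpha>)"
definition sigx :: "real \<Rightarrow> link \<Rightarrow> link \<Rightarrow> real" where
  "sigx \<alpha> e' e = power e' / (dcross e' e powr \<alpha>)"

definition gam :: "real \<Rightarrow> real \<Rightarrow> real \<Rightarrow> link \<Rightarrow> real" where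
  "gam \<alpha> \<beta> N e = \<beta> * sig \<alpha> e / (sig \<alpha> e - \<beta> * N)"

definition aff_hat :: "real \<Rightarrow> link \<Rightarrow> link \<Rightarrow> real" where
  "aff_hat \<alpha> e' e = sigx \<alpha> e' e / sig \<alpha> e"
definition aff :: "real \<Rightarrow> real \<Rightarrow> real \<Rightarrow> link \<Rightarrow> link \<Rightarrow> real" where
  "aff \<alpha> \<beta> N e' e = gam \<alpha> \<beta> N e * aff_hat \<alpha> e' e"
definition aff_bar :: "real \<Rightarrow> real \<Rightarrow> real \<Rightarrow> link \<Rightarrow> link \<Rightarrow> real" where
  "aff_bar \<alpha> \<beta> N e' e = min 1 (aff \<alpha> \<beta> N e' e)"
definition aff_bar_set :: "real \<Rightarrow> real \<Rightarrow> real \<Rightarrow> link set \<Rightarrow> link \<Rightarrow> real" where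
  "aff_bar_set \<alpha> \<beta> N L e = (\<Sum>e'\<in>L - {e}. aff_bar \<alpha> \<beta> N e' e)"

definition sinr_feasible :: "real \<Rightarrow> real \<Rightarrow> real \<Rightarrow> link set \<Rightarrow> bool" where
  "sinr_feasible \<alpha> \<beta> N L \<longleftrightarrow>
     (\<forall>e\<in>L. sig \<alpha> e / (N + (\<Sum>e'\<in>L - {e}. sigx \<alpha> e' e)) \<ge> \<beta>)"

definition Smin :: "real \<Rightarrow> link set \<Rightarrow> real" where
  "Smin \<alpha> Ls = Min (sig \<alpha> ` Ls)"
definition bucket :: "real \<Rightarrow> link set \<Rightarrow> nat \<Rightarrow> link set" where
  "bucket \<alpha> Ls i = {e\<in>Ls. 2^i * Smin \<alpha> Ls \<le> sig \<alpha> e \<and> sig \<alpha> e < 2^(i+1) * Smin \<alpha> Ls}"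

end

theory Submission
  imports Defs
begin

text \<open>Let x be the receiver of e and g the link of L whose receiver is nearest to x, at
  distance r. Links of L whose senders lie within r/2 of x are long and clustered, and only
  O(3^\<alpha>/\<beta>) of them fit into a feasible set of one bucket; each contributes at most 1.
  Every other link f interferes at e at most 3^\<alpha> times as strongly as at g, so its
  affectance on e is controlled by its interference at g, which feasibility at g bounds by
  S_g/\<beta> \<le> 2 S_e/\<beta> in total; the factor \<gamma>_e \<le> \<beta>(1+\<epsilon>)/\<epsilon> comes from the noise margin.\<close>

lemma dist_le_three_times_of_clustered_senders:
  fixes a b c x y :: "'a::metric_space"
  assumes "dist a x < r / 2" "dist c x < r / 2" "r \<le> dist b x" "dist c y \<le> dist a b"
  shows "dist a y \<le> 3 * dist a b"
proof -
  have "dist a y \<le> dist a x + dist x c + dist c y"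
    using dist_triangle[of a y c] dist_triangle[of a c x] by linarith
  moreover have "dist b x \<le> dist a b + dist a x"
    using dist_triangle[of b x a] by (simp add: dist_commute)
  ultimately show ?thesis
    using assms by (simp add: dist_commute)
qed

lemma dist_le_three_times_of_far_sender:
  fixes a x y :: "'a::metric_space"
  assumes "r / 2 \<le> dist a x" "dist y x \<le> r"
  shows "dist a y \<le> 3 * dist a x"
  using dist_triangle[of a y x] assms by (simp add: dist_commute)

lemma divide_powr_le_scaled:
  fixes a c d d' P :: real
  assumes "a \<ge> 0" "d > 0" "d' > 0" "d' \<le> c * d" "P \<ge> 0"
  shows "P / d powr a \<le> c powr a * (P / d' powr a)"
proof -
  have "c > 0"
    using assms(2-4) by (smt (verit) mult_nonpos_nonneg)
  have "d' powr a \<le> c powr a * d powr a"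
    using assms \<open>c > 0\<close> by (metis powr_mono2 powr_mult less_imp_le)
  then show ?thesis
    using assms \<open>c > 0\<close> by (simp add: divide_simps mult_left_mono mult.commute mult.left_commute)
qed

lemma sum_subset_le_sum_remove_plus:
  fixes f :: "'a \<Rightarrow> real"
  assumes "finite A" "B \<subseteq> A" "\<And>x. x \<in> A \<Longrightarrow> 0 \<le> f x" "0 \<le> f a"
  shows "sum f B \<le> sum f (A - {a}) + f a"
proof -
  have "sum f B \<le> sum f A"
    using assms(1-3) by (intro sum_mono2) auto
  also have "\<dots> \<le> sum f (A - {a}) + f a"
    using assms(1,4) by (cases "a \<in> A") (simp_all add: sum.remove)
  finally show ?thesis .
qed

lemma sig_pos:
  assumes "power e > 0" "sender e \<noteq> receiver e"
  shows "sig \<alpha> e > 0"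
  using assms unfolding sig_def dlen_def by simp

lemma sigx_nonneg:
  assumes "power e' \<ge> 0"
  shows "sigx \<alpha> e' e \<ge> 0"
  using assms unfolding sigx_def by simp

lemma gam_bounds:
  assumes "sig \<alpha> e / N \<ge> (1 + \<epsilon>) * \<beta>" "N > 0" "\<beta> > 0" "\<epsilon> > 0"
  shows "0 < gam \<alpha> \<beta> N e" "gam \<alpha> \<beta> N e \<le> \<beta> * (1 + \<epsilon>) / \<epsilon>"
proof -
  have margin: "sig \<alpha> e \<ge> (1 + \<epsilon>) * \<beta> * N"
    using assms(1,2) by (simp add: pos_le_divide_eq)
  moreover have "\<epsilon> * \<beta> * N > 0"
    using assms by simp
  ultimately have gap: "sig \<alpha> e - \<beta> * N \<ge> \<epsilon> * \<beta> * N" "sig \<alpha> e - \<beta> * N > 0"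
    by (auto simp: algebra_simps)
  moreover have "sig \<alpha> e > 0"
    using gap(2) assms(2,3) by (smt (verit) mult_pos_pos)
  ultimately show "0 < gam \<alpha> \<beta> N e"
    unfolding gam_def using assms(3) by simp
  have "sig \<alpha> e * \<epsilon> \<le> (1 + \<epsilon>) * (sig \<alpha> e - \<beta> * N)"
    using margin by (simp add: algebra_simps)
  then have "\<beta> * sig \<alpha> e * \<epsilon> \<le> \<beta> * (1 + \<epsilon>) * (sig \<alpha> e - \<beta> * N)"
    using assms(3) by (metis mult.assoc mult_left_mono less_imp_le)
  then show "gam \<alpha> \<beta> N e \<le> \<beta> * (1 + \<epsilon>) / \<epsilon>"
    unfolding gam_def using gap(2) assms(4) by (simp add: divide_simps)
qed

lemma sig_le_twice_of_bucket:
  assumes "e \<in> bucket \<alpha> Ls i" "e' \<in> bucket \<alpha> Ls i"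
  shows "sig \<alpha> e' \<le> 2 * sig \<alpha> e"
  using assms unfolding bucket_def by auto

lemma sum_sigx_le_of_sinr_feasible:
  assumes "sinr_feasible \<alpha> \<beta> N L" "finite L" "e \<in> L" "F \<subseteq> L - {e}"
    and "N > 0" "\<beta> > 0" "\<And>e'. e' \<in> L \<Longrightarrow> sigx \<alpha> e' e \<ge> 0"
  shows "(\<Sum>e'\<in>F. sigx \<alpha> e' e) \<le> sig \<alpha> e / \<beta>"
proof -
  let ?I = "\<Sum>e'\<in>L - {e}. sigx \<alpha> e' e"
  have "?I \<ge> 0"
    using assms(7) by (intro sum_nonneg) auto
  moreover have "sig \<alpha> e / (N + ?I) \<ge> \<beta>"
    using assms(1,3) unfolding sinr_feasible_def by auto
  ultimately have "\<beta> * (N + ?I) \<le> sig \<alpha> e"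
    using assms(5) by (simp add: le_divide_eq)
  then have "\<beta> * ?I \<le> sig \<alpha> e"
    using assms(5,6) by (smt (verit) distrib_left mult_pos_pos)
  moreover have "(\<Sum>e'\<in>F. sigx \<alpha> e' e) \<le> ?I"
    using assms(2,4,7) by (intro sum_mono2) auto
  ultimately show ?thesis
    using assms(6) by (smt (verit) le_divide_eq mult.commute mult_left_mono)
qed

locale sinr_network =
  fixes \<alpha> \<beta> \<epsilon> N :: real and Ls :: "link set"
  assumes alpha_nonneg: "\<alpha> \<ge> 0" and beta_pos: "\<beta> > 0" and eps_pos: "\<epsilon> > 0"
    and noise_pos: "N > 0" and finite_links: "finite Ls"
    and power_pos: "\<And>f. f \<in> Ls \<Longrightarrow> power f > 0"
    and sender_ne_receiver: "\<And>f f'. f \<in> Ls \<Longrightarrow> f' \<in> Ls \<Longrightarrow> sender f' \<noteq> receiver f"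
    and sig_margin: "\<And>f. f \<in> Ls \<Longrightarrow> sig \<alpha> f / N \<ge> (1 + \<epsilon>) * \<beta>"
begin

lemma bucket_subset_links: "bucket \<alpha> Ls i \<subseteq> Ls"
  unfolding bucket_def by auto

lemma sig_pos_link: "f \<in> Ls \<Longrightarrow> sig \<alpha> f > 0"
  by (simp add: power_pos sender_ne_receiver sig_pos)

lemma sigx_nonneg_link: "f \<in> Ls \<Longrightarrow> sigx \<alpha> f g \<ge> 0"
  by (simp add: power_pos less_imp_le sigx_nonneg)

lemma dlen_pos: "f \<in> Ls \<Longrightarrow> dlen f > 0"
  unfolding dlen_def using sender_ne_receiver by simp

lemma dcross_pos: "f \<in> Ls \<Longrightarrow> g \<in> Ls \<Longrightarrow> dcross f g > 0"
  unfolding dcross_def using sender_ne_receiver by simp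

lemma aff_nonneg: "f \<in> Ls \<Longrightarrow> e \<in> Ls \<Longrightarrow> aff \<alpha> \<beta> N f e \<ge> 0"
  unfolding aff_def aff_hat_def
  using gam_bounds(1)[OF sig_margin noise_pos beta_pos eps_pos] sigx_nonneg_link sig_pos_link
  by (simp add: less_imp_le)

lemma aff_bar_nonneg: "f \<in> Ls \<Longrightarrow> e \<in> Ls \<Longrightarrow> aff_bar \<alpha> \<beta> N f e \<ge> 0"
  unfolding aff_bar_def by (simp add: aff_nonneg)

lemma feasible_interference_le:
  assumes "L \<subseteq> Ls" "sinr_feasible \<alpha> \<beta> N L" "g \<in> L" "F \<subseteq> L - {g}"
  shows "(\<Sum>f\<in>F. sigx \<alpha> f g) \<le> sig \<alpha> g / \<beta>"
proof -
  from assms(1) have "finite L" and "\<And>f. f \<in> L \<Longrightarrow> sigx \<alpha> f g \<ge> 0"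
    using finite_links finite_subset sigx_nonneg_link by blast+
  then show ?thesis
    using sum_sigx_le_of_sinr_feasible assms(2-4) noise_pos beta_pos by blast
qed

text \<open>The shortest link of such a cluster receives from each of the others a signal
  comparable to its own, so feasibility at that link bounds the size of the cluster.\<close>

lemma card_le_of_clustered_senders:
  assumes L: "L \<subseteq> bucket \<alpha> Ls i" "sinr_feasible \<alpha> \<beta> N L" and "F \<subseteq> L"
    and senders: "\<And>f. f \<in> F \<Longrightarrow> dist (sender f) x < r / 2"
    and receivers: "\<And>f. f \<in> F \<Longrightarrow> r \<le> dist (receiver f) x"
  shows "real (card F) \<le> 1 + 2 * 3 powr \<alpha> / \<beta>"
proof (cases "F = {}")
  case True
  then show ?thesis
    using beta_pos by simp
next
  case False
  have LLs: "L \<subseteq> Ls"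
    using L(1) bucket_subset_links by blast
  have "finite F"
    using \<open>F \<subseteq> L\<close> LLs finite_links by (meson finite_subset)
  then obtain g where g: "g \<in> F" and shortest: "\<And>f. f \<in> F \<Longrightarrow> dlen g \<le> dlen f"
    using False by (metis arg_min_if_finite(1) arg_min_least)
  have "sig \<alpha> g / (2 * 3 powr \<alpha>) \<le> sigx \<alpha> f g" if f: "f \<in> F - {g}" for f
  proof -
    have fLs: "f \<in> Ls" and gLs: "g \<in> Ls"
      using f g \<open>F \<subseteq> L\<close> LLs by auto
    have "dcross f g \<le> 3 * dlen f"
      unfolding dcross_def dlen_def
      using f g senders receivers shortest[of f]
      by (intro dist_le_three_times_of_clustered_senders[where x = x and r = r and c = "sender g"])
         (auto simp: dlen_def)
    then have "sig \<alpha> f \<le> 3 powr \<alpha> * sigx \<alpha> f g"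
      unfolding sig_def sigx_def
      using divide_powr_le_scaled alpha_nonneg dlen_pos dcross_pos power_pos fLs gLs
      by (simp add: less_imp_le)
    moreover have "sig \<alpha> g \<le> 2 * sig \<alpha> f"
      using f g \<open>F \<subseteq> L\<close> L(1) sig_le_twice_of_bucket by blast
    ultimately show ?thesis
      by (simp add: divide_simps mult.commute)
  qed
  then have "real (card (F - {g})) * (sig \<alpha> g / (2 * 3 powr \<alpha>)) \<le> (\<Sum>f\<in>F - {g}. sigx \<alpha> f g)"
    by (intro sum_bounded_below) auto
  also have "\<dots> \<le> sig \<alpha> g / \<beta>"
    using g \<open>F \<subseteq> L\<close> by (intro feasible_interference_le[OF LLs L(2)]) auto
  finally have "real (card (F - {g})) \<le> 2 * 3 powr \<alpha> / \<beta>"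
    using sig_pos_link[of g] g \<open>F \<subseteq> L\<close> LLs beta_pos by (auto simp: divide_simps mult.commute)
  then show ?thesis
    using card.remove[OF \<open>finite F\<close> g] by simp
qed

lemma sum_aff_le_of_close_receiver:
  assumes L: "L \<subseteq> bucket \<alpha> Ls i" "sinr_feasible \<alpha> \<beta> N L" and e: "e \<in> bucket \<alpha> Ls i"
    and g: "g \<in> L" and "F \<subseteq> L - {g}"
    and close: "\<And>f. f \<in> F \<Longrightarrow> dcross f g \<le> 3 * dcross f e"
  shows "(\<Sum>f\<in>F. aff \<alpha> \<beta> N f e) \<le> 2 * 3 powr \<alpha> * (1 + \<epsilon>) / \<epsilon>"
proof -
  have LLs: "L \<subseteq> Ls" and eLs: "e \<in> Ls"
    using L(1) e bucket_subset_links by auto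
  define c where "c = gam \<alpha> \<beta> N e / sig \<alpha> e"
  have gam: "0 < gam \<alpha> \<beta> N e" "gam \<alpha> \<beta> N e \<le> \<beta> * (1 + \<epsilon>) / \<epsilon>"
    using gam_bounds[OF sig_margin[OF eLs] noise_pos beta_pos eps_pos] by auto
  then have "c \<ge> 0"
    unfolding c_def using sig_pos_link[OF eLs] by simp
  have "aff \<alpha> \<beta> N f e \<le> c * 3 powr \<alpha> * sigx \<alpha> f g" if f: "f \<in> F" for f
  proof -
    have fLs: "f \<in> Ls" and gLs: "g \<in> Ls"
      using f g \<open>F \<subseteq> L - {g}\<close> LLs by auto
    have "sigx \<alpha> f e \<le> 3 powr \<alpha> * sigx \<alpha> f g"
      unfolding sigx_def
      using divide_powr_le_scaled alpha_nonneg dcross_pos close power_pos f fLs gLs eLs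
      by (simp add: less_imp_le)
    then show ?thesis
      unfolding aff_def aff_hat_def c_def using \<open>c \<ge> 0\<close>
      by (metis c_def mult.assoc mult_left_mono times_divide_eq_left times_divide_eq_right)
  qed
  then have "(\<Sum>f\<in>F. aff \<alpha> \<beta> N f e) \<le> c * 3 powr \<alpha> * (\<Sum>f\<in>F. sigx \<alpha> f g)"
    by (simp add: sum_distrib_left sum_mono)
  also have "\<dots> \<le> c * 3 powr \<alpha> * (sig \<alpha> g / \<beta>)"
    using feasible_interference_le[OF LLs L(2) g \<open>F \<subseteq> L - {g}\<close>] \<open>c \<ge> 0\<close>
    by (intro mult_left_mono) auto
  also have "\<dots> \<le> c * 3 powr \<alpha> * (2 * sig \<alpha> e / \<beta>)"
    using sig_le_twice_of_bucket[OF e, of g] g L(1) \<open>c \<ge> 0\<close> beta_pos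
    by (intro mult_left_mono divide_right_mono) auto
  also have "\<dots> = 2 * 3 powr \<alpha> * gam \<alpha> \<beta> N e / \<beta>"
    unfolding c_def using sig_pos_link[OF eLs] by (simp add: field_simps)
  also have "\<dots> \<le> 2 * 3 powr \<alpha> * (\<beta> * (1 + \<epsilon>) / \<epsilon>) / \<beta>"
    using gam(2) beta_pos by (intro divide_right_mono mult_left_mono) auto
  also have "\<dots> = 2 * 3 powr \<alpha> * (1 + \<epsilon>) / \<epsilon>"
    using beta_pos by simp
  finally show ?thesis .
qed

lemma sum_aff_bar_le_of_close_receiver:
  assumes L: "L \<subseteq> bucket \<alpha> Ls i" "sinr_feasible \<alpha> \<beta> N L" and e: "e \<in> bucket \<alpha> Ls i"
    and g: "g \<in> L" and "F \<subseteq> L"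
    and close: "\<And>f. f \<in> F \<Longrightarrow> dcross f g \<le> 3 * dcross f e"
  shows "(\<Sum>f\<in>F. aff_bar \<alpha> \<beta> N f e) \<le> 1 + 2 * 3 powr \<alpha> * (1 + \<epsilon>) / \<epsilon>"
proof -
  have LLs: "L \<subseteq> Ls" and eLs: "e \<in> Ls"
    using L(1) e bucket_subset_links by auto
  then have nonneg: "\<And>f. f \<in> L \<Longrightarrow> 0 \<le> aff_bar \<alpha> \<beta> N f e"
    using aff_bar_nonneg by blast
  have "finite F"
    using \<open>F \<subseteq> L\<close> LLs finite_links by (meson finite_subset)
  have "(\<Sum>f\<in>F. aff_bar \<alpha> \<beta> N f e) \<le> (\<Sum>f\<in>insert g (F - {g}). aff_bar \<alpha> \<beta> N f e)"
    using \<open>finite F\<close> \<open>F \<subseteq> L\<close> g nonneg by (intro sum_mono2) auto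
  also have "\<dots> = aff_bar \<alpha> \<beta> N g e + (\<Sum>f\<in>F - {g}. aff_bar \<alpha> \<beta> N f e)"
    using \<open>finite F\<close> by (subst sum.insert) auto
  also have "\<dots> \<le> 1 + (\<Sum>f\<in>F - {g}. aff \<alpha> \<beta> N f e)"
    by (intro add_mono sum_mono) (auto simp: aff_bar_def)
  also have "\<dots> \<le> 1 + 2 * 3 powr \<alpha> * (1 + \<epsilon>) / \<epsilon>"
    using \<open>F \<subseteq> L\<close> close by (intro add_left_mono sum_aff_le_of_close_receiver[OF L e g]) auto
  finally show ?thesis .
qed

lemma aff_bar_set_le:
  assumes L: "L \<subseteq> bucket \<alpha> Ls i" "sinr_feasible \<alpha> \<beta> N L" and e: "e \<in> bucket \<alpha> Ls i"
  shows "aff_bar_set \<alpha> \<beta> N L e \<le> 2 + 2 * 3 powr \<alpha> / \<beta> + 2 * 3 powr \<alpha> * (1 + \<epsilon>) / \<epsilon>"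
proof (cases "L = {}")
  case True
  then show ?thesis
    unfolding aff_bar_set_def using beta_pos eps_pos by simp
next
  case False
  have "finite L"
    using L(1) bucket_subset_links finite_links by (meson finite_subset subset_trans)
  define x where "x = receiver e"
  obtain g where g: "g \<in> L" and nearest: "\<And>f. f \<in> L \<Longrightarrow> dist (receiver g) x \<le> dist (receiver f) x"
    using arg_min_if_finite(1)[OF \<open>finite L\<close> False, of "\<lambda>f. dist (receiver f) x"]
      arg_min_least[OF \<open>finite L\<close> False, of _ "\<lambda>f. dist (receiver f) x"] by blast
  define r where "r = dist (receiver g) x"
  define Near where "Near = {f \<in> L - {e}. dist (sender f) x < r / 2}"
  define Far where "Far = {f \<in> L - {e}. r / 2 \<le> dist (sender f) x}"
  have "finite Near" "finite Far"
    unfolding Near_def Far_def using \<open>finite L\<close> by auto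
  have aff_bar_le_1: "\<And>f. aff_bar \<alpha> \<beta> N f e \<le> 1"
    unfolding aff_bar_def by simp
  have "L - {e} = Near \<union> Far" "Near \<inter> Far = {}"
    unfolding Near_def Far_def by auto
  then have split: "aff_bar_set \<alpha> \<beta> N L e
      = (\<Sum>f\<in>Near. aff_bar \<alpha> \<beta> N f e) + (\<Sum>f\<in>Far. aff_bar \<alpha> \<beta> N f e)"
    unfolding aff_bar_set_def using \<open>finite Near\<close> \<open>finite Far\<close> by (simp add: sum.union_disjoint)
  have "(\<Sum>f\<in>Near. aff_bar \<alpha> \<beta> N f e) \<le> real (card Near)"
    using sum_bounded_above[of Near "\<lambda>f. aff_bar \<alpha> \<beta> N f e" 1] aff_bar_le_1 by simp
  also have "\<dots> \<le> 1 + 2 * 3 powr \<alpha> / \<beta>"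
    using nearest by (intro card_le_of_clustered_senders[OF L, where x = x and r = r])
      (auto simp: Near_def r_def)
  finally have near: "(\<Sum>f\<in>Near. aff_bar \<alpha> \<beta> N f e) \<le> 1 + 2 * 3 powr \<alpha> / \<beta>" .
  have "dcross f g \<le> 3 * dcross f e" if "f \<in> Far" for f
    unfolding dcross_def x_def[symmetric] using that
    by (intro dist_le_three_times_of_far_sender[where r = r]) (auto simp: Far_def r_def)
  then have far: "(\<Sum>f\<in>Far. aff_bar \<alpha> \<beta> N f e) \<le> 1 + 2 * 3 powr \<alpha> * (1 + \<epsilon>) / \<epsilon>"
    by (intro sum_aff_bar_le_of_close_receiver[OF L e g]) (auto simp: Far_def)
  show ?thesis
    using split near far by linarith
qed

end

theorem theorem1:
  fixes \<alpha> \<beta> \<epsilon> :: real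
  assumes "\<alpha> \<ge> 0" and "\<beta> > 0" and "\<epsilon> > 0"
  shows "\<exists>C::real. \<forall>(N::real) (Ls::link set) (i::nat) (L::link set) (e::link).
     N > 0 \<and> finite Ls \<and> (\<forall>f\<in>Ls. power f > 0)
     \<and> (\<forall>f\<in>Ls. \<forall>f'\<in>Ls. sender f' \<noteq> receiver f)
     \<and> (\<forall>f\<in>Ls. sig \<alpha> f / N \<ge> (1 + \<epsilon>) * \<beta>)
     \<and> L \<subseteq> bucket \<alpha> Ls i \<and> sinr_feasible \<alpha> \<beta> N L \<and> e \<in> bucket \<alpha> Ls i
     \<longrightarrow> (\<Sum>e'\<in>{e'\<in>L. dlen e' \<ge> dlen e}. aff_bar \<alpha> \<beta> N e' e)
           \<le> aff_bar_set \<alpha> \<beta> N L e + aff_bar \<alpha> \<beta> N e e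
       \<and> aff_bar_set \<alpha> \<beta> N L e + aff_bar \<alpha> \<beta> N e e \<le> C"
proof (intro exI allI impI conjI; elim conjE)
  fix N Ls i L e
  assume "N > 0" "finite Ls" "\<forall>f\<in>Ls. power f > 0" "\<forall>f\<in>Ls. \<forall>f'\<in>Ls. sender f' \<noteq> receiver f"
    "\<forall>f\<in>Ls. sig \<alpha> f / N \<ge> (1 + \<epsilon>) * \<beta>"
    and L: "L \<subseteq> bucket \<alpha> Ls i" "sinr_feasible \<alpha> \<beta> N L" and e: "e \<in> bucket \<alpha> Ls i"
  then interpret sinr_network \<alpha> \<beta> \<epsilon> N Ls
    using assms by unfold_locales auto
  have "L \<subseteq> Ls" "e \<in> Ls"
    using L(1) e bucket_subset_links by auto
  moreover have "finite L"
    using \<open>L \<subseteq> Ls\<close> finite_links finite_subset by blast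
  ultimately show "(\<Sum>e'\<in>{e'\<in>L. dlen e' \<ge> dlen e}. aff_bar \<alpha> \<beta> N e' e)
      \<le> aff_bar_set \<alpha> \<beta> N L e + aff_bar \<alpha> \<beta> N e e"
    unfolding aff_bar_set_def using aff_bar_nonneg[of _ e]
    by (intro sum_subset_le_sum_remove_plus) (auto simp del: split_paired_All)
  show "aff_bar_set \<alpha> \<beta> N L e + aff_bar \<alpha> \<beta> N e e
      \<le> 3 + 2 * 3 powr \<alpha> / \<beta> + 2 * 3 powr \<alpha> * (1 + \<epsilon>) / \<epsilon>"
    using aff_bar_set_le[OF L e] by (simp add: aff_bar_def)
qed

end
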